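(* Let $T=\bigoplus_p T_p$ be a torsion abelian group with every $T_p$ finite, and let $G$ be a pure subgroup of $\prod_p T_p$ containing $T$ such that $G/T$ is divisible (so $T$ is the torsion subgroup of $G$). Let $\gamma:G\to G$ be any endomorphism and $X=\gamma(G)$, with torsion subgroup $T_X$. Then $T_X=\gamma(T)$ and $X/T_X$ is divisible.
   Context: All groups are abelian; $T_p$ is the $p$-primary component of $T$, and $T=\bigoplus_p T_p$ is identified with its natural image in $\prod_p T_p$. *)

theory Defs
  imports "HOL-Algebra.Algebra" "HOL-Computational_Algebra.Primes"
begin

definition divisible_group :: "('a, 'b) monoid_scheme \<Rightarrow> bool" where
  "divisible_group H \<longleftrightarrow>
     (\<forall>x\<in>carrier H. \<forall>n::nat. n > 0 \<longrightarrow> (\<exists>y\<in>carrier H. y [^]\<^bsub>H\<^esub> n = x))"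

definition torsion_part :: "('a, 'b) monoid_scheme \<Rightarrow> 'a set \<Rightarrow> 'a set" where
  "torsion_part H S = {x\<in>S. \<exists>n::nat. n > 0 \<and> x [^]\<^bsub>H\<^esub> n = \<one>\<^bsub>H\<^esub>}"

end

theory Submission
  imports Defs
begin

text \<open>
  Let \<open>x = \<gamma> g\<close> have finite order \<open>n\<close>, let \<open>P\<close> be the set of primes dividing \<open>n\<close>, and let
  \<open>N\<close> be a product of powers of the primes in \<open>P\<close> annihilating every \<open>T\<^sub>p\<close> with \<open>p \<in> P\<close>.
  Split \<open>g = a b\<close> with \<open>a \<in> T\<close> supported on \<open>P\<close> and \<open>b\<close> supported off \<open>P\<close>. Since \<open>N\<close> is
  prime to every \<open>q \<notin> P\<close>, the \<open>q\<close>-component of \<open>b\<close> has an \<open>N\<close>-th root in the \<open>q\<close>-group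
  \<open>T\<^sub>q\<close>; so \<open>b\<close> is an \<open>N\<close>-th power in \<open>\<Prod>\<^sub>p T\<^sub>p\<close>, and by purity \<open>b = z\<^sup>N\<close> with \<open>z \<in> G\<close>.
  Now \<open>x = \<gamma> a \<cdot> (\<gamma> z)\<^sup>N\<close>: at \<open>p \<in> P\<close> the factor \<open>(\<gamma> z)\<^sup>N\<close> vanishes, and at \<open>q \<notin> P\<close> both
  \<open>x\<close> and \<open>\<gamma> a\<close> vanish, being killed by exponents prime to \<open>q\<close>. Hence \<open>x = \<gamma> a \<in> \<gamma>(T)\<close>.
  Divisibility passes from \<open>G/T\<close> to \<open>\<gamma>(G)/\<gamma>(T)\<close>: \<open>g = t h\<^sup>n\<close> gives \<open>\<gamma> g = \<gamma> t (\<gamma> h)\<^sup>n\<close>.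
\<close>

lemma (in group) eq_one_if_pow_eq_one_coprime_ord:
  assumes "x \<in> carrier G" "x [^] n = \<one>" "coprime n (ord x)"
  shows "x = \<one>"
proof -
  have "ord x dvd n" using assms(1,2) pow_eq_id by blast
  then have "ord x = 1" using assms(3) by (metis coprime_common_divisor_nat dvd_refl)
  then show ?thesis using ord_eq_1 assms(1) by blast
qed

lemma (in group) exists_root_if_coprime_ord:
  assumes "a \<in> carrier G" "coprime n (ord a)"
  shows "\<exists>y\<in>carrier G. y [^] n = a"
proof (cases "n = 0")
  case True
  then have "a = \<one>" using assms ord_eq_1 by simp
  then show ?thesis using True by auto
next
  case False
  then obtain u v where uv: "n * u = ord a * v + 1"
    using bezout_nat[of n "ord a"] assms(2) by auto
  have "(a [^] u) [^] n = a [^] (ord a * v) \<otimes> a"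
    using assms(1) by (simp add: nat_pow_pow mult.commute[of u] uv nat_pow_mult[symmetric])
  also have "\<dots> = a" using assms(1) by (simp add: nat_pow_pow[symmetric])
  finally show ?thesis using assms(1) by blast
qed

lemma (in group) coprime_ord_if_pow_prime_power_eq_one:
  assumes "Factorial_Ring.prime p" "x \<in> carrier G" "x [^] (p ^ k) = \<one>" "\<not> p dvd n"
  shows "coprime n (ord x)"
proof -
  obtain j where "ord x = p ^ j"
    using assms(2,3) pow_eq_id divides_primepow_nat[OF assms(1)] by blast
  then show ?thesis using assms(1,4) prime_imp_coprime coprime_commute by (metis coprime_power_right_iff)
qed

lemma (in group) pow_prime_power_order_eq_one:
  fixes p :: nat
  assumes "finite (carrier G)" "Factorial_Ring.prime p" "x \<in> carrier G" "x [^] (p ^ k) = \<one>"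
  shows "x [^] (p ^ order G) = \<one>"
proof -
  obtain j where j: "ord x = p ^ j"
    using assms(3,4) pow_eq_id divides_primepow_nat[OF assms(2)] by blast
  have "order G > 0" using assms(1,3) unfolding order_def by (simp add: card_gt_0_iff) blast
  then have "p ^ j \<le> order G" using j ord_dvd_group_order[OF assms(3)] by (metis dvd_imp_le)
  moreover have "j < p ^ j" using assms(2) by (simp add: power_gt_expt prime_gt_Suc_0_nat)
  ultimately have "p ^ j dvd p ^ order G" by (simp add: le_imp_power_dvd)
  then show ?thesis using assms(3) j pow_eq_id by simp
qed

lemma nat_pow_product_group:
  "x [^]\<^bsub>product_group I G\<^esub> (n::nat) = (\<lambda>i\<in>I. x i [^]\<^bsub>G i\<^esub> n)"
  by (induction n) (auto intro!: restrict_ext)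

lemma pow_eq_one_product_group_iff:
  "x [^]\<^bsub>product_group I G\<^esub> (n::nat) = \<one>\<^bsub>product_group I G\<^esub> \<longleftrightarrow>
     (\<forall>i\<in>I. x i [^]\<^bsub>G i\<^esub> n = \<one>\<^bsub>G i\<^esub>)"
  by (auto simp: nat_pow_product_group restrict_def fun_eq_iff)

lemma comm_group_product_group:
  assumes "\<And>i. i \<in> I \<Longrightarrow> comm_group (G i)"
  shows "comm_group (product_group I G)"
proof (rule group.group_comm_groupI)
  show "group (product_group I G)" using assms by (simp add: comm_group.axioms(2))
  fix x y assume "x \<in> carrier (product_group I G)" "y \<in> carrier (product_group I G)"
  then show "x \<otimes>\<^bsub>product_group I G\<^esub> y = y \<otimes>\<^bsub>product_group I G\<^esub> x"
    using assms by (auto intro!: restrict_ext simp: comm_groupE(4) PiE_iff)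
qed

lemma exists_root_product_group:
  assumes "x \<in> carrier (product_group I G)"
    and "\<And>i. i \<in> I \<Longrightarrow> \<exists>y\<in>carrier (G i). y [^]\<^bsub>G i\<^esub> (n::nat) = x i"
  shows "\<exists>y\<in>carrier (product_group I G). y [^]\<^bsub>product_group I G\<^esub> n = x"
proof -
  obtain f where f: "\<And>i. i \<in> I \<Longrightarrow> f i \<in> carrier (G i) \<and> f i [^]\<^bsub>G i\<^esub> n = x i"
    using bchoice[of I "\<lambda>i y. y \<in> carrier (G i) \<and> y [^]\<^bsub>G i\<^esub> n = x i"] assms(2) by blast
  have "restrict f I [^]\<^bsub>product_group I G\<^esub> n = x"
    using assms(1) f by (auto simp: nat_pow_product_group PiE_iff extensional_def)
  moreover have "restrict f I \<in> carrier (product_group I G)" using f by auto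
  ultimately show ?thesis by blast
qed

lemma product_group_split:
  assumes "\<And>i. i \<in> I \<Longrightarrow> monoid (G i)" "x \<in> carrier (product_group I G)"
  shows "x = (\<lambda>i\<in>I. if i \<in> P then x i else \<one>\<^bsub>G i\<^esub>)
               \<otimes>\<^bsub>product_group I G\<^esub> (\<lambda>i\<in>I. if i \<in> P then \<one>\<^bsub>G i\<^esub> else x i)"
  using assms by (auto simp: PiE_iff fun_eq_iff extensional_def monoid.l_one monoid.r_one)

lemma subgroup_nat_pow_closed:
  assumes "subgroup H G" "x \<in> H"
  shows "x [^]\<^bsub>G\<^esub> (n::nat) \<in> H"
  using assms by (induction n) (auto simp: subgroup.one_closed subgroup.m_closed)

lemma (in comm_group) divisible_group_Mod_iff:
  assumes "subgroup H G" "subgroup N G" "N \<subseteq> H"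
  shows "divisible_group (subgroup_generated G H Mod N) \<longleftrightarrow>
           (\<forall>x\<in>H. \<forall>n::nat. n > 0 \<longrightarrow> (\<exists>y\<in>H. x \<in> N #> y [^] n))"
proof -
  let ?K = "subgroup_generated G H"
  have carrier_K: "carrier ?K = H"
    using assms(1) by (rule subgroup.carrier_subgroup_generated_subgroup)
  interpret K: comm_group ?K by (intro abelian_subgroup_generated comm_group_axioms)
  have "subgroup N ?K" using assms(2,3) carrier_K by (simp add: subgroup_subgroup_generated_iff)
  then interpret N: normal N ?K by (rule K.subgroup_imp_normal)
  have rcos_K: "r_coset ?K = r_coset G" and pow_K: "pow ?K = (pow G :: _ \<Rightarrow> nat \<Rightarrow> _)"
    by (simp_all add: r_coset_def fun_eq_iff pow_subgroup_generated)
  have pow_coset: "(N #> y) [^]\<^bsub>?K Mod N\<^esub> n = N #> y [^] n" if "y \<in> H" for y and n :: nat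
    using hom_nat_pow[OF N.r_coset_hom_Mod _ K.is_group N.factorgroup_is_group] that carrier_K rcos_K pow_K
    by simp
  have coset_eq: "N #> y = N #> x \<longleftrightarrow> x \<in> N #> y" if "x \<in> H" "y \<in> H" for x y
    using K.repr_independence[of x N y] K.rcos_self[of x N] that carrier_K rcos_K \<open>subgroup N ?K\<close>
    by auto
  have "(\<exists>D\<in>carrier (?K Mod N). D [^]\<^bsub>?K Mod N\<^esub> n = N #> x) \<longleftrightarrow> (\<exists>y\<in>H. x \<in> N #> y [^] n)"
    if "x \<in> H" for x and n :: nat
  proof -
    have "y [^] n \<in> H" if "y \<in> H" for y using assms(1) that by (rule subgroup_nat_pow_closed)
    then show ?thesis
      unfolding carrier_FactGroup carrier_K rcos_K using pow_coset coset_eq \<open>x \<in> H\<close> by auto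
  qed
  then show ?thesis
    unfolding divisible_group_def carrier_FactGroup carrier_K rcos_K by auto
qed

lemma divisible_group_Mod_image:
  fixes G (structure)
  assumes "comm_group G" "comm_group G'" "subgroup H G" "subgroup N G" "N \<subseteq> H"
    and f: "f \<in> hom (subgroup_generated G H) G'"
    and div: "divisible_group (subgroup_generated G H Mod N)"
  shows "divisible_group (subgroup_generated G' (f ` H) Mod f ` N)"
proof -
  let ?K = "subgroup_generated G H"
  interpret G: comm_group G by fact
  interpret G': comm_group G' by fact
  have carrier_K: "carrier ?K = H"
    using assms(3) by (rule subgroup.carrier_subgroup_generated_subgroup)
  interpret f: group_hom ?K G' f
    using f by (simp add: group_hom_def group_hom_axioms_def G.group_subgroup_generated)
  have "subgroup N ?K" using assms(4,5) carrier_K by (simp add: G.subgroup_subgroup_generated_iff)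
  then have sub_fN: "subgroup (f ` N) G'" by (rule f.subgroup_img_is_subgroup)
  have sub_fH: "subgroup (f ` H) G'" using f.img_is_subgroup carrier_K by simp
  have mult_K: "x \<otimes>\<^bsub>?K\<^esub> y = x \<otimes> y" and pow_K: "x [^]\<^bsub>?K\<^esub> n = x [^] n" for x y and n :: nat
    by (simp_all add: pow_subgroup_generated)
  show ?thesis
    unfolding G'.divisible_group_Mod_iff[OF sub_fH sub_fN image_mono[OF assms(5)]]
  proof (intro ballI allI impI)
    fix x and n :: nat assume "x \<in> f ` H" "n > 0"
    then obtain g where g: "g \<in> H" "x = f g" by blast
    then obtain y where y: "y \<in> H" "g \<in> N #> y [^] n"
      using div \<open>n > 0\<close> G.divisible_group_Mod_iff[OF assms(3-5)] by blast
    then obtain t where t: "t \<in> N" "g = t \<otimes> y [^] n" unfolding r_coset_def by blast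
    have "t \<in> H" "y [^] n \<in> H"
      using t(1) assms(5) subgroup_nat_pow_closed[OF assms(3) y(1)] by auto
    then have "f g = f t \<otimes>\<^bsub>G'\<^esub> f y [^]\<^bsub>G'\<^esub> n"
      using t(2) y(1) f.hom_mult[of t "y [^] n"] f.hom_nat_pow[of y n] carrier_K
      by (simp add: mult_K pow_K)
    then have "x \<in> f ` N #>\<^bsub>G'\<^esub> f y [^]\<^bsub>G'\<^esub> n"
      using g t unfolding r_coset_def by blast
    then show "\<exists>z\<in>f ` H. x \<in> f ` N #>\<^bsub>G'\<^esub> z [^]\<^bsub>G'\<^esub> n" using y by blast
  qed
qed


definition pure_subgroup :: "('a, 'b) monoid_scheme \<Rightarrow> 'a set \<Rightarrow> bool" where
  "pure_subgroup H S \<longleftrightarrow> subgroup S H \<and>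
     (\<forall>n::nat. n > 0 \<longrightarrow> (\<forall>x\<in>S. (\<exists>y\<in>carrier H. y [^]\<^bsub>H\<^esub> n = x) \<longrightarrow> (\<exists>y\<in>S. y [^]\<^bsub>H\<^esub> n = x)))"

locale primary_family =
  fixes Tp :: "nat \<Rightarrow> ('a, 'b) monoid_scheme"
  assumes primary: "\<And>p::nat. Factorial_Ring.prime p \<Longrightarrow>
        comm_group (Tp p) \<and> finite (carrier (Tp p)) \<and>
        (\<forall>x\<in>carrier (Tp p). \<exists>k::nat. x [^]\<^bsub>Tp p\<^esub> (p ^ k) = \<one>\<^bsub>Tp p\<^esub>)"
begin

abbreviation prodT :: "(nat \<Rightarrow> 'a) monoid" where
  "prodT \<equiv> product_group {p. Factorial_Ring.prime p} Tp"

abbreviation sumT :: "(nat \<Rightarrow> 'a) set" where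
  "sumT \<equiv> carrier (sum_group {p. Factorial_Ring.prime p} Tp)"

lemma group_Tp: "Factorial_Ring.prime p \<Longrightarrow> group (Tp p)"
  using primary[of p] comm_group.axioms(2) by auto

lemma finite_carrier_Tp: "Factorial_Ring.prime p \<Longrightarrow> finite (carrier (Tp p))"
  using primary[of p] by auto

lemma primary_element:
  "Factorial_Ring.prime p \<Longrightarrow> x \<in> carrier (Tp p) \<Longrightarrow> \<exists>k. x [^]\<^bsub>Tp p\<^esub> (p ^ k) = \<one>\<^bsub>Tp p\<^esub>"
  using primary[of p] by auto

lemma comm_group_prodT: "comm_group prodT"
  using primary[THEN conjunct1] by (intro comm_group_product_group) simp

lemma group_prodT: "group prodT"
  using comm_group_prodT comm_group.axioms(2) by blast

lemma carrier_sumT: "sumT = {x \<in> carrier prodT. finite {p. Factorial_Ring.prime p \<and> x p \<noteq> \<one>\<^bsub>Tp p\<^esub>}}"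
  using carrier_sum_group[of "{p. Factorial_Ring.prime p}" Tp] group_Tp by simp

lemma subgroup_sumT: "subgroup sumT prodT"
  using subgroup_sum_group[of "{p. Factorial_Ring.prime p}" Tp] group_Tp carrier_sumT by simp

text \<open>The factor \<open>p ^ order (Tp p)\<close> rather than \<open>order (Tp p)\<close> makes every prime divisor of
  the exponent lie in \<open>P\<close> without an appeal to Cauchy's theorem.\<close>
definition primary_exponent :: "nat set \<Rightarrow> nat" where
  "primary_exponent P = (\<Prod>p\<in>P. p ^ order (Tp p))"

lemma primary_exponent_pos: "\<forall>p\<in>P. Factorial_Ring.prime p \<Longrightarrow> primary_exponent P > 0"
  unfolding primary_exponent_def by (simp add: prime_gt_0_nat prod_pos)

lemma pow_primary_exponent_eq_one:
  assumes "finite P" "p \<in> P" "Factorial_Ring.prime p" "y \<in> carrier (Tp p)"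
  shows "y [^]\<^bsub>Tp p\<^esub> primary_exponent P = \<one>\<^bsub>Tp p\<^esub>"
proof -
  interpret group "Tp p" using assms(3) by (rule group_Tp)
  obtain k where "y [^]\<^bsub>Tp p\<^esub> (p ^ k) = \<one>\<^bsub>Tp p\<^esub>" using primary_element assms(3,4) by blast
  then have "ord y dvd p ^ order (Tp p)"
    using pow_prime_power_order_eq_one finite_carrier_Tp assms(3,4) pow_eq_id by blast
  also have "\<dots> dvd primary_exponent P"
    unfolding primary_exponent_def using assms(1,2) by (rule dvd_prodI)
  finally show ?thesis using assms(4) pow_eq_id by blast
qed

lemma prime_dvd_primary_exponent_imp_mem:
  assumes "finite P" "\<forall>p\<in>P. Factorial_Ring.prime p" "Factorial_Ring.prime q" "q dvd primary_exponent P"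
  shows "q \<in> P"
proof -
  have "\<exists>p\<in>P. q dvd p ^ order (Tp p)"
    using assms(4) prime_dvd_prod_iff[OF assms(1,3)] by (simp add: primary_exponent_def)
  then obtain p where p: "p \<in> P" "q dvd p ^ order (Tp p)" ..
  then have "q = p"
    using primes_dvd_imp_eq[OF assms(3)] prime_dvd_power[OF assms(3)] assms(2) by blast
  with p(1) show ?thesis by simp
qed

lemma component_eq_one_if_not_dvd:
  assumes "y \<in> carrier prodT" "y [^]\<^bsub>prodT\<^esub> m = \<one>\<^bsub>prodT\<^esub>" "Factorial_Ring.prime q" "\<not> q dvd m"
  shows "y q = \<one>\<^bsub>Tp q\<^esub>"
proof -
  interpret group "Tp q" using assms(3) by (rule group_Tp)
  have yq: "y q \<in> carrier (Tp q)" using assms(1,3) by auto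
  obtain k where "y q [^]\<^bsub>Tp q\<^esub> (q ^ k) = \<one>\<^bsub>Tp q\<^esub>" using primary_element assms(3) yq by blast
  then have "coprime m (ord (y q))"
    using coprime_ord_if_pow_prime_power_eq_one assms(3,4) yq by blast
  moreover have "y q [^]\<^bsub>Tp q\<^esub> m = \<one>\<^bsub>Tp q\<^esub>"
    using assms(2,3) unfolding pow_eq_one_product_group_iff by simp
  ultimately show ?thesis using eq_one_if_pow_eq_one_coprime_ord yq by blast
qed

lemma exists_root_component:
  assumes "Factorial_Ring.prime q" "\<not> q dvd n" "y \<in> carrier (Tp q)"
  shows "\<exists>z\<in>carrier (Tp q). z [^]\<^bsub>Tp q\<^esub> n = y"
proof -
  interpret group "Tp q" using assms(1) by (rule group_Tp)
  obtain k where "y [^]\<^bsub>Tp q\<^esub> (q ^ k) = \<one>\<^bsub>Tp q\<^esub>" using primary_element assms(1,3) by blast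
  then show ?thesis
    using exists_root_if_coprime_ord coprime_ord_if_pow_prime_power_eq_one assms by blast
qed

lemma sumT_torsion:
  assumes "t \<in> sumT"
  shows "\<exists>n::nat>0. t [^]\<^bsub>prodT\<^esub> n = \<one>\<^bsub>prodT\<^esub>"
proof -
  define F where "F = {p. Factorial_Ring.prime p \<and> t p \<noteq> \<one>\<^bsub>Tp p\<^esub>}"
  have F: "finite F" "\<forall>p\<in>F. Factorial_Ring.prime p"
    using assms unfolding carrier_sumT F_def by simp_all
  have "t p [^]\<^bsub>Tp p\<^esub> primary_exponent F = \<one>\<^bsub>Tp p\<^esub>" if "Factorial_Ring.prime p" for p
  proof (cases "p \<in> F")
    case True
    have "t p \<in> carrier (Tp p)" using assms that carrier_sumT by (simp add: PiE_iff)
    with F(1) True that show ?thesis by (rule pow_primary_exponent_eq_one)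
  next
    case False
    then show ?thesis using that group_Tp F_def by (simp add: group.is_monoid monoid.nat_pow_one)
  qed
  then have "t [^]\<^bsub>prodT\<^esub> primary_exponent F = \<one>\<^bsub>prodT\<^esub>"
    unfolding pow_eq_one_product_group_iff by simp
  with primary_exponent_pos[OF F(2)] show ?thesis by blast
qed

lemma pure_decomposition:
  assumes pure: "pure_subgroup prodT G" and "sumT \<subseteq> G" "g \<in> G" "finite P" "\<forall>p\<in>P. Factorial_Ring.prime p"
  obtains a z where "a \<in> sumT" "z \<in> G" "a [^]\<^bsub>prodT\<^esub> primary_exponent P = \<one>\<^bsub>prodT\<^esub>"
    "g = a \<otimes>\<^bsub>prodT\<^esub> z [^]\<^bsub>prodT\<^esub> primary_exponent P"
proof -
  let ?N = "primary_exponent P"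
  have sub: "subgroup G prodT" using pure unfolding pure_subgroup_def by blast
  have gPT: "g \<in> carrier prodT" using sub assms(3) subgroup.subset by blast
  define a where "a = (\<lambda>i\<in>{p. Factorial_Ring.prime p}. if i \<in> P then g i else \<one>\<^bsub>Tp i\<^esub>)"
  define b where "b = (\<lambda>i\<in>{p. Factorial_Ring.prime p}. if i \<in> P then \<one>\<^bsub>Tp i\<^esub> else g i)"
  have g_eq: "g = a \<otimes>\<^bsub>prodT\<^esub> b"
    unfolding a_def b_def using gPT group_Tp group.is_monoid by (intro product_group_split) auto
  have aPT: "a \<in> carrier prodT" and bPT: "b \<in> carrier prodT"
    using gPT group_Tp by (auto simp: a_def b_def PiE_iff group.is_monoid monoid.one_closed)
  have "{p. Factorial_Ring.prime p \<and> a p \<noteq> \<one>\<^bsub>Tp p\<^esub>} \<subseteq> P" by (auto simp: a_def)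
  then have aST: "a \<in> sumT" using aPT assms(4) finite_subset unfolding carrier_sumT by blast
  have "b = inv\<^bsub>prodT\<^esub> a \<otimes>\<^bsub>prodT\<^esub> g"
    using group.inv_solve_left[OF group_prodT bPT aPT gPT] g_eq by simp
  then have bG: "b \<in> G"
    using aST assms(2,3) sub subgroup.m_closed subgroup.m_inv_closed by (metis subsetD)
  have "a i [^]\<^bsub>Tp i\<^esub> ?N = \<one>\<^bsub>Tp i\<^esub>" if "Factorial_Ring.prime i" for i
  proof (cases "i \<in> P")
    case True
    have "g i \<in> carrier (Tp i)" using gPT that by (simp add: PiE_iff)
    then show ?thesis using assms(4) True that pow_primary_exponent_eq_one by (simp add: a_def)
  next
    case False
    then show ?thesis using that group_Tp by (simp add: a_def group.is_monoid monoid.nat_pow_one)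
  qed
  then have a_pow: "a [^]\<^bsub>prodT\<^esub> ?N = \<one>\<^bsub>prodT\<^esub>"
    unfolding pow_eq_one_product_group_iff by simp
  have "\<exists>y\<in>carrier (Tp i). y [^]\<^bsub>Tp i\<^esub> ?N = b i" if "i \<in> {p. Factorial_Ring.prime p}" for i
  proof (cases "i \<in> P")
    case True
    then show ?thesis using that group_Tp
      by (auto simp: b_def group.is_monoid monoid.nat_pow_one monoid.one_closed intro!: bexI[of _ "\<one>\<^bsub>Tp i\<^esub>"])
  next
    case False
    then have "\<not> i dvd ?N" using that assms(4,5) prime_dvd_primary_exponent_imp_mem by blast
    moreover have "b i \<in> carrier (Tp i)" using bPT that by (simp add: PiE_iff)
    ultimately show ?thesis using that exists_root_component by simp
  qed
  then obtain y where "y \<in> carrier prodT" "y [^]\<^bsub>prodT\<^esub> ?N = b"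
    using exists_root_product_group[OF bPT] by blast
  then obtain z where "z \<in> G" "z [^]\<^bsub>prodT\<^esub> ?N = b"
    using pure bG primary_exponent_pos[OF assms(5)] unfolding pure_subgroup_def by blast
  then show ?thesis using that aST a_pow g_eq by blast
qed

lemma eq_if_eq_mult_pow_primary_exponent:
  assumes x: "x \<in> carrier prodT" and a: "a \<in> carrier prodT" and w: "w \<in> carrier prodT"
    and x_eq: "x = a \<otimes>\<^bsub>prodT\<^esub> w [^]\<^bsub>prodT\<^esub> primary_exponent P"
    and x_pow: "x [^]\<^bsub>prodT\<^esub> (n::nat) = \<one>\<^bsub>prodT\<^esub>"
    and a_pow: "a [^]\<^bsub>prodT\<^esub> primary_exponent P = \<one>\<^bsub>prodT\<^esub>"
    and P: "finite P" "\<forall>p\<in>P. Factorial_Ring.prime p"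
    and n: "\<And>p. Factorial_Ring.prime p \<Longrightarrow> p dvd n \<Longrightarrow> p \<in> P"
  shows "x = a"
proof (rule PiE_ext[OF x[unfolded carrier_product_group] a[unfolded carrier_product_group]])
  let ?N = "primary_exponent P"
  fix p :: nat assume "p \<in> {p. Factorial_Ring.prime p}"
  then have p: "Factorial_Ring.prime p" by simp
  show "x p = a p"
  proof (cases "p \<in> P")
    case True
    have "w p \<in> carrier (Tp p)" using w p by (simp add: PiE_iff)
    with P(1) True p have "w p [^]\<^bsub>Tp p\<^esub> ?N = \<one>\<^bsub>Tp p\<^esub>"
      by (rule pow_primary_exponent_eq_one)
    moreover have "a p \<in> carrier (Tp p)" using a p by (simp add: PiE_iff)
    ultimately show ?thesis
      using x_eq p group_Tp[OF p] by (simp add: nat_pow_product_group group.is_monoid monoid.r_one)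
  next
    case False
    then have "\<not> p dvd n" "\<not> p dvd ?N"
      using n[OF p] prime_dvd_primary_exponent_imp_mem[OF P p] by blast+
    then show ?thesis
      using component_eq_one_if_not_dvd[OF x x_pow p] component_eq_one_if_not_dvd[OF a a_pow p] by simp
  qed
qed

lemma torsion_image_mem_image_sumT:
  assumes pure: "pure_subgroup prodT G" and "sumT \<subseteq> G"
    and hom: "\<gamma> \<in> hom (subgroup_generated prodT G) prodT"
    and "g \<in> G" "n > 0" and torsion: "\<gamma> g [^]\<^bsub>prodT\<^esub> (n::nat) = \<one>\<^bsub>prodT\<^esub>"
  shows "\<gamma> g \<in> \<gamma> ` sumT"
proof -
  have sub: "subgroup G prodT" using pure unfolding pure_subgroup_def by blast
  interpret \<gamma>: group_hom "subgroup_generated prodT G" prodT \<gamma>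
    using hom group_prodT by (simp add: group_hom_def group_hom_axioms_def group.group_subgroup_generated)
  have carrier_GG: "carrier (subgroup_generated prodT G) = G"
    using sub by (rule subgroup.carrier_subgroup_generated_subgroup)
  define P where "P = {p. Factorial_Ring.prime p \<and> p dvd n}"
  have "P \<subseteq> {..n}" using \<open>n > 0\<close> by (auto simp: P_def dest: dvd_imp_le)
  then have P: "finite P" "\<forall>p\<in>P. Factorial_Ring.prime p"
    using finite_subset by (auto simp: P_def)
  let ?N = "primary_exponent P"
  obtain a z where a: "a \<in> sumT" "a [^]\<^bsub>prodT\<^esub> ?N = \<one>\<^bsub>prodT\<^esub>" and z: "z \<in> G"
    and g_eq: "g = a \<otimes>\<^bsub>prodT\<^esub> z [^]\<^bsub>prodT\<^esub> ?N"
    using pure_decomposition[OF pure assms(2,4) P] by blast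
  have aG: "a \<in> G" using a(1) assms(2) by blast
  have zN: "z [^]\<^bsub>prodT\<^esub> ?N \<in> G" using sub z by (rule subgroup_nat_pow_closed)
  have gamma_g: "\<gamma> g = \<gamma> a \<otimes>\<^bsub>prodT\<^esub> \<gamma> z [^]\<^bsub>prodT\<^esub> ?N"
    using g_eq \<gamma>.hom_mult[of a "z [^]\<^bsub>prodT\<^esub> ?N"] \<gamma>.hom_nat_pow[of z ?N] aG zN z carrier_GG
    by (simp add: pow_subgroup_generated)
  have gamma_a: "\<gamma> a [^]\<^bsub>prodT\<^esub> ?N = \<one>\<^bsub>prodT\<^esub>"
    using a(2) \<gamma>.hom_nat_pow[of a ?N] \<gamma>.hom_one aG carrier_GG by (simp add: pow_subgroup_generated)
  have "\<gamma> g \<in> carrier prodT" "\<gamma> a \<in> carrier prodT" "\<gamma> z \<in> carrier prodT"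
    using \<gamma>.hom_closed \<open>g \<in> G\<close> aG z carrier_GG by simp_all
  then have "\<gamma> g = \<gamma> a"
    using gamma_g torsion gamma_a P by (rule eq_if_eq_mult_pow_primary_exponent) (simp add: P_def)
  then show ?thesis using a(1) by blast
qed

lemma torsion_part_image_eq:
  assumes pure: "pure_subgroup prodT G" and "sumT \<subseteq> G"
    and hom: "\<gamma> \<in> hom (subgroup_generated prodT G) prodT"
  shows "torsion_part prodT (\<gamma> ` G) = \<gamma> ` sumT"
proof
  show "torsion_part prodT (\<gamma> ` G) \<subseteq> \<gamma> ` sumT"
  proof
    fix x assume "x \<in> torsion_part prodT (\<gamma> ` G)"
    then obtain g and n :: nat where "g \<in> G" "x = \<gamma> g" "n > 0" "\<gamma> g [^]\<^bsub>prodT\<^esub> n = \<one>\<^bsub>prodT\<^esub>"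
      unfolding torsion_part_def by blast
    then show "x \<in> \<gamma> ` sumT" using torsion_image_mem_image_sumT[OF assms] by blast
  qed
  have sub: "subgroup G prodT" using pure unfolding pure_subgroup_def by blast
  interpret \<gamma>: group_hom "subgroup_generated prodT G" prodT \<gamma>
    using hom group_prodT by (simp add: group_hom_def group_hom_axioms_def group.group_subgroup_generated)
  have carrier_GG: "carrier (subgroup_generated prodT G) = G"
    using sub by (rule subgroup.carrier_subgroup_generated_subgroup)
  show "\<gamma> ` sumT \<subseteq> torsion_part prodT (\<gamma> ` G)"
  proof
    fix x assume "x \<in> \<gamma> ` sumT"
    then obtain t where t: "t \<in> sumT" "x = \<gamma> t" by blast
    then obtain n :: nat where "n > 0" "t [^]\<^bsub>prodT\<^esub> n = \<one>\<^bsub>prodT\<^esub>" using sumT_torsion by blast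
    moreover have "t \<in> G" using t(1) assms(2) by blast
    moreover have "\<gamma> t [^]\<^bsub>prodT\<^esub> n = \<one>\<^bsub>prodT\<^esub>"
      using calculation \<gamma>.hom_nat_pow[of t n] \<gamma>.hom_one carrier_GG by (simp add: pow_subgroup_generated)
    ultimately show "x \<in> torsion_part prodT (\<gamma> ` G)"
      using t(2) unfolding torsion_part_def by blast
  qed
qed

end

theorem mainTheorem13:
  fixes Tp :: "nat \<Rightarrow> ('a, 'b) monoid_scheme"
    and G :: "(nat \<Rightarrow> 'a) set"
    and \<gamma> :: "(nat \<Rightarrow> 'a) \<Rightarrow> (nat \<Rightarrow> 'a)"
  assumes Tp: "\<And>p::nat. Factorial_Ring.prime p \<Longrightarrow>
        comm_group (Tp p) \<and> finite (carrier (Tp p)) \<and>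
        (\<forall>x\<in>carrier (Tp p). \<exists>k::nat. x [^]\<^bsub>Tp p\<^esub> (p ^ k) = \<one>\<^bsub>Tp p\<^esub>)"
    and sub: "subgroup G (product_group {p::nat. Factorial_Ring.prime p} Tp)"
    and TG: "carrier (sum_group {p::nat. Factorial_Ring.prime p} Tp) \<subseteq> G"
    and pure: "\<And>(n::nat) x. n > 0 \<Longrightarrow> x \<in> G \<Longrightarrow>
        (\<exists>y\<in>carrier (product_group {p::nat. Factorial_Ring.prime p} Tp).
            y [^]\<^bsub>product_group {p::nat. Factorial_Ring.prime p} Tp\<^esub> n = x) \<Longrightarrow>
        (\<exists>y\<in>G. y [^]\<^bsub>product_group {p::nat. Factorial_Ring.prime p} Tp\<^esub> n = x)"
    and div: "divisible_group
        (subgroup_generated (product_group {p::nat. Factorial_Ring.prime p} Tp) G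
           Mod carrier (sum_group {p::nat. Factorial_Ring.prime p} Tp))"
    and hom: "\<gamma> \<in> hom (subgroup_generated (product_group {p::nat. Factorial_Ring.prime p} Tp) G)
                     (subgroup_generated (product_group {p::nat. Factorial_Ring.prime p} Tp) G)"
  shows "torsion_part (product_group {p::nat. Factorial_Ring.prime p} Tp) (\<gamma> ` G)
           = \<gamma> ` carrier (sum_group {p::nat. Factorial_Ring.prime p} Tp)
       \<and> divisible_group
           (subgroup_generated (product_group {p::nat. Factorial_Ring.prime p} Tp) (\<gamma> ` G)
              Mod torsion_part (product_group {p::nat. Factorial_Ring.prime p} Tp) (\<gamma> ` G))"
proof -
  interpret primary_family Tp by (rule primary_family.intro[OF Tp])
  have pure_G: "pure_subgroup prodT G"
    unfolding pure_subgroup_def using sub pure by blast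
  have hom_G: "\<gamma> \<in> hom (subgroup_generated prodT G) prodT"
    using hom hom_into_subgroup_eq[OF sub group_prodT] by blast
  have "divisible_group (subgroup_generated prodT (\<gamma> ` G) Mod \<gamma> ` sumT)"
    using comm_group_prodT comm_group_prodT sub subgroup_sumT TG hom_G div
    by (rule divisible_group_Mod_image)
  then show ?thesis
    using torsion_part_image_eq[OF pure_G TG hom_G] by simp
qed

end
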